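(* Let $m\ge2$ be even and let $\mathcal{A},\mathcal{B}$ be sub-symmetric real $m$-th order $n$-dimensional tensors ($n=n_1+\cdots+n_r$). Consider the problem $$\begin{array}{cl}\min & f(x,y,w,\lambda):=\|y-\lambda^{\frac1{m-1}}x\|^2+(x^\top w)^2\\ \text{s.t.} & w-\mathcal{A}y^{m-1}+\mathcal{B}x^{m-1}=0,\\ & (x^i_\circ)^2-\|x^i_\bullet\|^2\ge0,\ x^i_\circ\ge0,\ i=1,\ldots,r,\\ & (w^i_\circ)^2-\|w^i_\bullet\|^2\ge0,\ w^i_\circ\ge0,\ i=1,\ldots,r,\\ & e^\top x=1,\quad e^\top y=\lambda^{\frac1{m-1}}.\end{array}$$ Let $(\bar x,\bar y,\bar w,\bar\lambda)$ be a stationary point of this problem with $\bar\lambda\neq0$, with associated multipliers as below, and let $\bar\delta,\bar\eta$ be the multipliers of the constraints $e^\top x=1$ and $e^\top y=\lambda^{1/(m-1)}$, respectively. Then $f(\bar x,\bar y,\bar w,\bar\lambda)=0$ if and only if $\bar\delta=\bar\eta=0$.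
   Context: A real $m$-th order $n$-dimensional tensor $\mathcal{A}=(a_{i_1\ldots i_m})$ is sub-symmetric if for each $i$ the tensor $(a_{ii_2\ldots i_m})_{i_2,\ldots,i_m}$ is invariant under permutations of $i_2,\ldots,i_m$. $\mathcal{A}x^{m-1}\in\mathbb{R}^n$ has $i$-th component $\sum_{i_2,\ldots,i_m}a_{ii_2\ldots i_m}x_{i_2}\cdots x_{i_m}$. Vectors are written $x=(x^1,\ldots,x^r)\in\mathbb{R}^{n_1}\times\cdots\times\mathbb{R}^{n_r}$, $x^i=(x^i_\circ,x^i_\bullet)\in\mathbb{R}\times\mathbb{R}^{n_i-1}$ (similarly $y,w$). $e=(e^1,\ldots,e^r)$, $e^i=(1,0,\ldots,0)^\top\in\mathbb{R}^{n_i}$. Since $m-1$ is odd, $\lambda^{1/(m-1)}$ is the real $(m-1)$-th root (differentiable at $\lambda\ne0$). A stationary point is a feasible point $(\bar x,\bar y,\bar w,\bar\lambda)$ for which there exist multipliers $\bar\alpha\in\mathbb{R}^n$, $\bar\beta,\bar\gamma,\bar\mu,\bar\theta\in\mathbb{R}^r_+$, $\bar\delta,\bar\eta\in\mathbb{R}$ such that the gradient with respect to $(x,y,w,\lambda)$ of the Lagrangian $$f-\bar\alpha^\top(w-\mathcal{A}y^{m-1}+\mathcal{B}x^{m-1})-\sum_i\bar\beta_i\big((x^i_\circ)^2-\|x^i_\bullet\|^2\big)-\sum_i\bar\gamma_ix^i_\circ-\sum_i\bar\mu_i\big((w^i_\circ)^2-\|w^i_\bullet\|^2\big)-\sum_i\bar\theta_iw^i_\circ-\bar\delta(e^\top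 x-1)-\bar\eta(e^\top y-\lambda^{\frac1{m-1}})$$ vanishes at $(\bar x,\bar y,\bar w,\bar\lambda)$, and each inequality multiplier times its constraint value is zero. *)

theory Defs
  imports "HOL-Analysis.Analysis" "HOL-Combinatorics.Permutations"
begin

(* Vectors in R^n are functions nat => real, only coordinates 0..n-1 matter.
   The block structure R^{n_1} x ... x R^{n_r} is given by r and the sizes ns 0 .. ns (r-1);
   block i occupies coordinates blk_off ns i, ..., blk_off ns i + ns i - 1.
   An m-th order n-dimensional tensor is a function from index lists (length m,
   entries < n) to reals. *)

definition blk_off :: "(nat \<Rightarrow> nat) \<Rightarrow> nat \<Rightarrow> nat" where
  "blk_off ns i = (\<Sum>j<i. ns j)"

definition tot_dim :: "nat \<Rightarrow> (nat \<Rightarrow> nat) \<Rightarrow> nat" where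
  "tot_dim r ns = (\<Sum>j<r. ns j)"

definition head :: "(nat \<Rightarrow> nat) \<Rightarrow> (nat \<Rightarrow> real) \<Rightarrow> nat \<Rightarrow> real" where
  "head ns x i = x (blk_off ns i)"

definition tail_sq :: "(nat \<Rightarrow> nat) \<Rightarrow> (nat \<Rightarrow> real) \<Rightarrow> nat \<Rightarrow> real" where
  "tail_sq ns x i = (\<Sum>k\<in>{Suc (blk_off ns i)..<blk_off ns i + ns i}. (x k)^2)"

definition e_dot :: "nat \<Rightarrow> (nat \<Rightarrow> nat) \<Rightarrow> (nat \<Rightarrow> real) \<Rightarrow> real" where
  "e_dot r ns x = (\<Sum>i<r. head ns x i)"

definition idx_lists :: "nat \<Rightarrow> nat \<Rightarrow> nat list set" where
  "idx_lists n k = {is. length is = k \<and> set is \<subseteq> {..<n}}"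

definition tens_app :: "nat \<Rightarrow> nat \<Rightarrow> (nat list \<Rightarrow> real) \<Rightarrow> (nat \<Rightarrow> real) \<Rightarrow> nat \<Rightarrow> real" where
  "tens_app m n A x i = (\<Sum>is\<in>idx_lists n (m - 1). A (i # is) * prod_list (map x is))"

definition sub_symmetric :: "nat \<Rightarrow> nat \<Rightarrow> (nat list \<Rightarrow> real) \<Rightarrow> bool" where
  "sub_symmetric m n A \<longleftrightarrow>
     (\<forall>i<n. \<forall>is\<in>idx_lists n (m - 1). \<forall>\<sigma>. \<sigma> permutes {..<m - 1} \<longrightarrow>
        A (i # map (\<lambda>k. is ! \<sigma> k) [0..<m - 1]) = A (i # is))"

definition obj :: "nat \<Rightarrow> nat \<Rightarrow> (nat \<Rightarrow> real) \<Rightarrow> (nat \<Rightarrow> real) \<Rightarrow> (nat \<Rightarrow> real) \<Rightarrow> real \<Rightarrow> real" where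
  "obj m n x y w lam = (\<Sum>k<n. (y k - root (m - 1) lam * x k)^2) + (\<Sum>k<n. x k * w k)^2"

definition feasible :: "nat \<Rightarrow> nat \<Rightarrow> (nat \<Rightarrow> nat) \<Rightarrow> (nat list \<Rightarrow> real) \<Rightarrow> (nat list \<Rightarrow> real)
   \<Rightarrow> (nat \<Rightarrow> real) \<Rightarrow> (nat \<Rightarrow> real) \<Rightarrow> (nat \<Rightarrow> real) \<Rightarrow> real \<Rightarrow> bool" where
  "feasible m r ns A B x y w lam \<longleftrightarrow>
     (\<forall>k<tot_dim r ns. w k - tens_app m (tot_dim r ns) A y k + tens_app m (tot_dim r ns) B x k = 0) \<and>
     (\<forall>i<r. (head ns x i)^2 - tail_sq ns x i \<ge> 0 \<and> head ns x i \<ge> 0) \<and>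
     (\<forall>i<r. (head ns w i)^2 - tail_sq ns w i \<ge> 0 \<and> head ns w i \<ge> 0) \<and>
     e_dot r ns x = 1 \<and> e_dot r ns y = root (m - 1) lam"

definition lagr :: "nat \<Rightarrow> nat \<Rightarrow> (nat \<Rightarrow> nat) \<Rightarrow> (nat list \<Rightarrow> real) \<Rightarrow> (nat list \<Rightarrow> real)
   \<Rightarrow> (nat \<Rightarrow> real) \<Rightarrow> (nat \<Rightarrow> real) \<Rightarrow> (nat \<Rightarrow> real) \<Rightarrow> (nat \<Rightarrow> real) \<Rightarrow> (nat \<Rightarrow> real) \<Rightarrow> real \<Rightarrow> real
   \<Rightarrow> (nat \<Rightarrow> real) \<Rightarrow> (nat \<Rightarrow> real) \<Rightarrow> (nat \<Rightarrow> real) \<Rightarrow> real \<Rightarrow> real" where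
  "lagr m r ns A B al be ga mu th de et x y w lam =
     (let n = tot_dim r ns in
      obj m n x y w lam
      - (\<Sum>k<n. al k * (w k - tens_app m n A y k + tens_app m n B x k))
      - (\<Sum>i<r. be i * ((head ns x i)^2 - tail_sq ns x i))
      - (\<Sum>i<r. ga i * head ns x i)
      - (\<Sum>i<r. mu i * ((head ns w i)^2 - tail_sq ns w i))
      - (\<Sum>i<r. th i * head ns w i)
      - de * (e_dot r ns x - 1)
      - et * (e_dot r ns y - root (m - 1) lam))"

definition stationary_with :: "nat \<Rightarrow> nat \<Rightarrow> (nat \<Rightarrow> nat) \<Rightarrow> (nat list \<Rightarrow> real) \<Rightarrow> (nat list \<Rightarrow> real)
   \<Rightarrow> (nat \<Rightarrow> real) \<Rightarrow> (nat \<Rightarrow> real) \<Rightarrow> (nat \<Rightarrow> real) \<Rightarrow> (nat \<Rightarrow> real) \<Rightarrow> (nat \<Rightarrow> real) \<Rightarrow> real \<Rightarrow> real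
   \<Rightarrow> (nat \<Rightarrow> real) \<Rightarrow> (nat \<Rightarrow> real) \<Rightarrow> (nat \<Rightarrow> real) \<Rightarrow> real \<Rightarrow> bool" where
  "stationary_with m r ns A B al be ga mu th de et x y w lam \<longleftrightarrow>
     feasible m r ns A B x y w lam \<and>
     (\<forall>i<r. be i \<ge> 0 \<and> ga i \<ge> 0 \<and> mu i \<ge> 0 \<and> th i \<ge> 0) \<and>
     (\<forall>i<r. be i * ((head ns x i)^2 - tail_sq ns x i) = 0 \<and> ga i * head ns x i = 0 \<and>
            mu i * ((head ns w i)^2 - tail_sq ns w i) = 0 \<and> th i * head ns w i = 0) \<and>
     (let L = lagr m r ns A B al be ga mu th de et in
       (\<forall>k<tot_dim r ns. ((\<lambda>t. L (x(k := t)) y w lam) has_real_derivative 0) (at (x k))) \<and>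
       (\<forall>k<tot_dim r ns. ((\<lambda>t. L x (y(k := t)) w lam) has_real_derivative 0) (at (y k))) \<and>
       (\<forall>k<tot_dim r ns. ((\<lambda>t. L x y (w(k := t)) lam) has_real_derivative 0) (at (w k))) \<and>
       ((\<lambda>t. L x y w t) has_real_derivative 0) (at lam))"

end

(* Euler's identity (x . grad g = d g for g homogeneous of degree d) turns each block of the
   stationarity conditions into one scalar equation. With s = lambda^(1/(m-1)), pairing the
   x-, y- and w-gradients of the Lagrangian with x, y, w and using complementarity,
   e^T x = 1 and e^T y = s relates delta, eta, U = ||y - s x||^2, (x^T w)^2 and the pairings of
   alpha with A y^(m-1) and B x^(m-1); the lambda-derivative gives eta = 2 (y - s x)^T x.
   Eliminating the alpha-terms leaves
     delta = 2 m (x^T w)^2 + 2 U - 2 s (y - s x)^T x.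
   As f = U + (x^T w)^2, f = 0 forces y = s x and hence delta = eta = 0; conversely eta = 0
   kills the last term, so delta = 0 forces both parts of f to vanish. *)

theory Submission
  imports Defs
begin

definition has_euler_derivative ::
    "nat \<Rightarrow> ((nat \<Rightarrow> real) \<Rightarrow> real) \<Rightarrow> ((nat \<Rightarrow> real) \<Rightarrow> real) \<Rightarrow> bool" where
  "has_euler_derivative n P E \<longleftrightarrow>
     (\<forall>x. \<exists>D. (\<forall>k<n. ((\<lambda>t. P (x(k := t))) has_real_derivative D k) (at (x k))) \<and>
              (\<Sum>k<n. x k * D k) = E x)"

lemma has_euler_derivative_cong:
  assumes "has_euler_derivative n P E" "\<And>x. P x = P' x" "\<And>x. E x = E' x"
  shows "has_euler_derivative n P' E'"
proof -
  have "P = P'" "E = E'" using assms(2,3) by auto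
  with assms(1) show ?thesis by simp
qed

lemma has_euler_derivative_const: "has_euler_derivative n (\<lambda>x. c) (\<lambda>x. 0)"
  unfolding has_euler_derivative_def by (intro allI exI[of _ "\<lambda>k. 0"]) auto

lemma has_euler_derivative_coord:
  assumes "j < n" shows "has_euler_derivative n (\<lambda>x. x j) (\<lambda>x. x j)"
  unfolding has_euler_derivative_def
proof (intro allI exI[of _ "\<lambda>k. if k = j then 1 else 0"] conjI allI impI)
  fix x :: "nat \<Rightarrow> real" and k
  show "((\<lambda>t. (x(k := t)) j) has_real_derivative (if k = j then 1 else 0)) (at (x k))"
    by (cases "k = j") (auto intro!: derivative_eq_intros)
  show "(\<Sum>k<n. x k * (if k = j then 1 else 0)) = x j"
    using assms by (simp add: if_distrib[of "(*) _"] cong: if_cong)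
qed

lemma has_euler_derivative_add:
  assumes "has_euler_derivative n P E" "has_euler_derivative n Q F"
  shows "has_euler_derivative n (\<lambda>x. P x + Q x) (\<lambda>x. E x + F x)"
  unfolding has_euler_derivative_def
proof
  fix x
  obtain D where D: "\<forall>k<n. ((\<lambda>t. P (x(k := t))) has_real_derivative D k) (at (x k))"
      "(\<Sum>k<n. x k * D k) = E x"
    using assms(1) unfolding has_euler_derivative_def by blast
  obtain D' where D': "\<forall>k<n. ((\<lambda>t. Q (x(k := t))) has_real_derivative D' k) (at (x k))"
      "(\<Sum>k<n. x k * D' k) = F x"
    using assms(2) unfolding has_euler_derivative_def by blast
  show "\<exists>D. (\<forall>k<n. ((\<lambda>t. P (x(k := t)) + Q (x(k := t))) has_real_derivative D k) (at (x k))) \<and>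
            (\<Sum>k<n. x k * D k) = E x + F x"
    using D D' by (intro exI[of _ "\<lambda>k. D k + D' k"])
      (auto intro: DERIV_add simp: distrib_left sum.distrib)
qed

lemma has_euler_derivative_mult:
  assumes "has_euler_derivative n P E" "has_euler_derivative n Q F"
  shows "has_euler_derivative n (\<lambda>x. P x * Q x) (\<lambda>x. E x * Q x + P x * F x)"
  unfolding has_euler_derivative_def
proof
  fix x
  obtain D where D: "\<forall>k<n. ((\<lambda>t. P (x(k := t))) has_real_derivative D k) (at (x k))"
      "(\<Sum>k<n. x k * D k) = E x"
    using assms(1) unfolding has_euler_derivative_def by blast
  obtain D' where D': "\<forall>k<n. ((\<lambda>t. Q (x(k := t))) has_real_derivative D' k) (at (x k))"
      "(\<Sum>k<n. x k * D' k) = F x"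
    using assms(2) unfolding has_euler_derivative_def by blast
  have "((\<lambda>t. P (x(k := t)) * Q (x(k := t))) has_real_derivative D k * Q x + P x * D' k) (at (x k))"
    if "k < n" for k
    using DERIV_mult[OF D(1)[rule_format, OF that] D'(1)[rule_format, OF that]]
    by (simp add: mult.commute)
  moreover have "(\<Sum>k<n. x k * (D k * Q x + P x * D' k)) = E x * Q x + P x * F x"
  proof -
    have "(\<Sum>k<n. x k * (D k * Q x + P x * D' k)) =
        (\<Sum>k<n. x k * D k * Q x + P x * (x k * D' k))"
      by (simp add: algebra_simps)
    also have "\<dots> = (\<Sum>k<n. x k * D k) * Q x + P x * (\<Sum>k<n. x k * D' k)"
      by (simp only: sum.distrib sum_distrib_left sum_distrib_right)
    finally show ?thesis using D(2) D'(2) by simp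
  qed
  ultimately show "\<exists>D''. (\<forall>k<n. ((\<lambda>t. P (x(k := t)) * Q (x(k := t))) has_real_derivative D'' k)
        (at (x k))) \<and> (\<Sum>k<n. x k * D'' k) = E x * Q x + P x * F x"
    by (intro exI[of _ "\<lambda>k. D k * Q x + P x * D' k"] conjI) auto
qed

lemma has_euler_derivative_cmult:
  "has_euler_derivative n P E \<Longrightarrow> has_euler_derivative n (\<lambda>x. c * P x) (\<lambda>x. c * E x)"
  by (rule has_euler_derivative_cong[OF has_euler_derivative_mult[OF has_euler_derivative_const]]) auto

lemma has_euler_derivative_diff:
  assumes "has_euler_derivative n P E" "has_euler_derivative n Q F"
  shows "has_euler_derivative n (\<lambda>x. P x - Q x) (\<lambda>x. E x - F x)"
  by (rule has_euler_derivative_cong[OF has_euler_derivative_add[OF assms(1)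
        has_euler_derivative_cmult[OF assms(2), of "-1"]]]) auto

lemma has_euler_derivative_power2:
  "has_euler_derivative n P E \<Longrightarrow> has_euler_derivative n (\<lambda>x. (P x)\<^sup>2) (\<lambda>x. 2 * P x * E x)"
  by (rule has_euler_derivative_cong[OF has_euler_derivative_mult]) (auto simp: power2_eq_square)

lemma has_euler_derivative_sum:
  assumes "finite I" "\<And>i. i \<in> I \<Longrightarrow> has_euler_derivative n (P i) (E i)"
  shows "has_euler_derivative n (\<lambda>x. \<Sum>i\<in>I. P i x) (\<lambda>x. \<Sum>i\<in>I. E i x)"
  using assms
  by (induction I rule: finite_induct) (auto intro!: has_euler_derivative_add has_euler_derivative_const)

lemma has_euler_derivative_prod_list:
  "set is \<subseteq> {..<n} \<Longrightarrow>
   has_euler_derivative n (\<lambda>x. prod_list (map x is)) (\<lambda>x. length is * prod_list (map x is))"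
proof (induction "is")
  case Nil
  show ?case by (simp add: has_euler_derivative_const)
next
  case (Cons j "is")
  then have "j < n"
    and "has_euler_derivative n (\<lambda>x. prod_list (map x is)) (\<lambda>x. length is * prod_list (map x is))"
    by auto
  then show ?case
    by (rule has_euler_derivative_cong[OF has_euler_derivative_mult[OF has_euler_derivative_coord]])
      (simp_all add: algebra_simps)
qed

(* No symmetry of the tensor is needed. *)
lemma has_euler_derivative_tens_app:
  "has_euler_derivative n (\<lambda>x. tens_app m n A x i) (\<lambda>x. real (m - 1) * tens_app m n A x i)"
proof -
  have "finite (idx_lists n (m - 1))"
    using finite_lists_length_eq[of "{..<n}" "m - 1"] by (simp add: idx_lists_def conj_commute)
  then show ?thesis
    unfolding tens_app_def sum_distrib_left
    by (intro has_euler_derivative_sum has_euler_derivative_cong[OF has_euler_derivative_cmult[OF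
          has_euler_derivative_prod_list]]) (auto simp: idx_lists_def)
qed

lemma has_euler_derivative_critical_point:
  assumes "has_euler_derivative n P E"
    and "\<forall>k<n. ((\<lambda>t. P (x(k := t))) has_real_derivative 0) (at (x k))"
  shows "E x = 0"
proof -
  obtain D where D: "\<forall>k<n. ((\<lambda>t. P (x(k := t))) has_real_derivative D k) (at (x k))"
      "(\<Sum>k<n. x k * D k) = E x"
    using assms(1) unfolding has_euler_derivative_def by blast
  with assms(2) have "\<forall>k<n. D k = 0" using DERIV_unique by blast
  with D(2) show ?thesis by simp
qed

lemma blk_off_add_le_tot_dim: "i < r \<Longrightarrow> blk_off ns i + ns i \<le> tot_dim r ns"
proof -
  assume "i < r"
  have "blk_off ns i + ns i = (\<Sum>j<Suc i. ns j)" by (simp add: blk_off_def)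
  also have "\<dots> \<le> (\<Sum>j<r. ns j)" using \<open>i < r\<close> by (intro sum_mono2) auto
  finally show ?thesis by (simp add: tot_dim_def)
qed

lemma has_euler_derivative_head:
  "i < r \<Longrightarrow> ns i \<ge> 1 \<Longrightarrow>
   has_euler_derivative (tot_dim r ns) (\<lambda>x. head ns x i) (\<lambda>x. head ns x i)"
  unfolding head_def using blk_off_add_le_tot_dim[of i r ns] by (intro has_euler_derivative_coord) auto

lemma has_euler_derivative_tail_sq:
  "i < r \<Longrightarrow> has_euler_derivative (tot_dim r ns) (\<lambda>x. tail_sq ns x i) (\<lambda>x. 2 * tail_sq ns x i)"
  unfolding tail_sq_def sum_distrib_left
  using blk_off_add_le_tot_dim[of i r ns]
  by (intro has_euler_derivative_sum) (auto intro!: has_euler_derivative_cong[OF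
        has_euler_derivative_power2[OF has_euler_derivative_coord]] simp: power2_eq_square)

lemma has_euler_derivative_e_dot:
  "\<forall>i<r. ns i \<ge> 1 \<Longrightarrow>
   has_euler_derivative (tot_dim r ns) (\<lambda>x. e_dot r ns x) (\<lambda>x. e_dot r ns x)"
  unfolding e_dot_def by (intro has_euler_derivative_sum has_euler_derivative_head) auto

lemmas has_euler_derivative_intros =
  has_euler_derivative_add has_euler_derivative_diff has_euler_derivative_mult
  has_euler_derivative_power2 has_euler_derivative_sum has_euler_derivative_tens_app
  has_euler_derivative_head has_euler_derivative_tail_sq has_euler_derivative_e_dot
  has_euler_derivative_coord has_euler_derivative_const

lemma has_euler_derivative_lagr_x:
  fixes m :: nat and lam :: real
  assumes "\<forall>i<r. ns i \<ge> 1"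
  defines "n \<equiv> tot_dim r ns" and "s \<equiv> root (m - 1) lam"
  shows "has_euler_derivative n (\<lambda>x. lagr m r ns A B al be ga mu th de et x y w lam)
    (\<lambda>x. 2 * (\<Sum>k<n. x k * w k)\<^sup>2 - 2 * s * (\<Sum>k<n. (y k - s * x k) * x k)
       - real (m - 1) * (\<Sum>k<n. al k * tens_app m n B x k)
       - 2 * (\<Sum>i<r. be i * ((head ns x i)\<^sup>2 - tail_sq ns x i))
       - (\<Sum>i<r. ga i * head ns x i) - de * e_dot r ns x)"
  unfolding lagr_def Let_def obj_def n_def s_def
  by (rule has_euler_derivative_cong[OF _ refl],
      ((rule has_euler_derivative_intros finite_lessThan | use assms in force)+)[1])
    (simp add: sum_distrib_left sum_subtractf algebra_simps power2_eq_square)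

lemma has_euler_derivative_lagr_y:
  fixes m :: nat and lam :: real
  assumes "\<forall>i<r. ns i \<ge> 1"
  defines "n \<equiv> tot_dim r ns" and "s \<equiv> root (m - 1) lam"
  shows "has_euler_derivative n (\<lambda>y. lagr m r ns A B al be ga mu th de et x y w lam)
    (\<lambda>y. 2 * (\<Sum>k<n. (y k - s * x k) * y k) + real (m - 1) * (\<Sum>k<n. al k * tens_app m n A y k)
       - et * e_dot r ns y)"
  unfolding lagr_def Let_def obj_def n_def s_def
  by (rule has_euler_derivative_cong[OF _ refl],
      ((rule has_euler_derivative_intros finite_lessThan | use assms in force)+)[1])
    (simp add: sum_distrib_left sum_negf algebra_simps)

lemma has_euler_derivative_lagr_w:
  fixes m :: nat and lam :: real
  assumes "\<forall>i<r. ns i \<ge> 1"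
  defines "n \<equiv> tot_dim r ns"
  shows "has_euler_derivative n (\<lambda>w. lagr m r ns A B al be ga mu th de et x y w lam)
    (\<lambda>w. 2 * (\<Sum>k<n. x k * w k)\<^sup>2 - (\<Sum>k<n. al k * w k)
       - 2 * (\<Sum>i<r. mu i * ((head ns w i)\<^sup>2 - tail_sq ns w i)) - (\<Sum>i<r. th i * head ns w i))"
  unfolding lagr_def Let_def obj_def n_def
  by (rule has_euler_derivative_cong[OF _ refl],
      ((rule has_euler_derivative_intros finite_lessThan | use assms in force)+)[1])
    (simp add: sum_distrib_left sum_subtractf algebra_simps power2_eq_square)

lemma DERIV_odd_root_comp_zero:
  assumes "odd k" "t \<noteq> 0"
    and "DERIV F (root k t) :> D" and "DERIV (\<lambda>u. F (root k u)) t :> 0"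
  shows "D = 0"
proof -
  have "0 < k" using \<open>odd k\<close> by (intro odd_pos)
  then have "DERIV (root k) t :> inverse (real k * root k t ^ (k - Suc 0))"
    using assms(1,2) by (intro DERIV_real_root_generic) auto
  from DERIV_chain2[OF assms(3) this]
  have "DERIV (\<lambda>u. F (root k u)) t :> D * inverse (real k * root k t ^ (k - Suc 0))" .
  with assms(4) have "D * inverse (real k * root k t ^ (k - Suc 0)) = 0"
    using DERIV_unique by blast
  with \<open>0 < k\<close> \<open>t \<noteq> 0\<close> show ?thesis by simp
qed

lemma sum_mult_eq_0_if_sum_squares_eq_0:
  fixes v u :: "nat \<Rightarrow> real"
  assumes "(\<Sum>k\<in>I. (v k)\<^sup>2) = 0" "finite I"
  shows "(\<Sum>k\<in>I. v k * u k) = 0"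
proof -
  have "\<forall>k\<in>I. (v k)\<^sup>2 = 0"
    using assms by (subst (asm) sum_nonneg_eq_0_iff) auto
  then show ?thesis by (intro sum.neutral) simp
qed

locale stationary_point =
  fixes m r :: nat and ns :: "nat \<Rightarrow> nat" and A B :: "nat list \<Rightarrow> real"
    and x y w :: "nat \<Rightarrow> real" and lam :: real
    and al be ga mu th :: "nat \<Rightarrow> real" and de et :: real
  assumes blocks_nonempty: "\<forall>i<r. ns i \<ge> 1"
    and stationary: "stationary_with m r ns A B al be ga mu th de et x y w lam"
begin

abbreviation "n \<equiv> tot_dim r ns"
abbreviation "lam_root \<equiv> root (m - 1) lam"
abbreviation "L \<equiv> lagr m r ns A B al be ga mu th de et"

lemma feasible_point: "feasible m r ns A B x y w lam"
  using stationary by (simp add: stationary_with_def)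

lemma complementary_sums:
  "(\<Sum>i<r. be i * ((head ns x i)\<^sup>2 - tail_sq ns x i)) = 0" "(\<Sum>i<r. ga i * head ns x i) = 0"
  "(\<Sum>i<r. mu i * ((head ns w i)\<^sup>2 - tail_sq ns w i)) = 0" "(\<Sum>i<r. th i * head ns w i) = 0"
  using stationary unfolding stationary_with_def by (auto intro!: sum.neutral)

lemma euler_identity_x:
  "de = 2 * (\<Sum>k<n. x k * w k)\<^sup>2 - 2 * lam_root * (\<Sum>k<n. (y k - lam_root * x k) * x k)
     - real (m - 1) * (\<Sum>k<n. al k * tens_app m n B x k)"
proof -
  have "\<forall>k<n. ((\<lambda>t. L (x(k := t)) y w lam) has_real_derivative 0) (at (x k))"
    using stationary by (simp add: stationary_with_def Let_def)
  from has_euler_derivative_critical_point[OF has_euler_derivative_lagr_x[OF blocks_nonempty] this]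
  show ?thesis using feasible_point complementary_sums by (simp add: feasible_def)
qed

lemma euler_identity_y:
  "et * lam_root = 2 * (\<Sum>k<n. (y k - lam_root * x k) * y k)
     + real (m - 1) * (\<Sum>k<n. al k * tens_app m n A y k)"
proof -
  have "\<forall>k<n. ((\<lambda>t. L x (y(k := t)) w lam) has_real_derivative 0) (at (y k))"
    using stationary by (simp add: stationary_with_def Let_def)
  from has_euler_derivative_critical_point[OF has_euler_derivative_lagr_y[OF blocks_nonempty] this]
  show ?thesis using feasible_point by (simp add: feasible_def)
qed

lemma euler_identity_w:
  "2 * (\<Sum>k<n. x k * w k)\<^sup>2 =
     (\<Sum>k<n. al k * tens_app m n A y k) - (\<Sum>k<n. al k * tens_app m n B x k)"
proof -
  have "\<forall>k<n. ((\<lambda>t. L x y (w(k := t)) lam) has_real_derivative 0) (at (w k))"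
    using stationary by (simp add: stationary_with_def Let_def)
  from has_euler_derivative_critical_point[OF has_euler_derivative_lagr_w[OF blocks_nonempty] this]
  have "2 * (\<Sum>k<n. x k * w k)\<^sup>2 = (\<Sum>k<n. al k * w k)"
    using complementary_sums by simp
  also have "\<dots> = (\<Sum>k<n. al k * (tens_app m n A y k - tens_app m n B x k))"
  proof (rule sum.cong)
    fix k assume "k \<in> {..<n}"
    with feasible_point have "w k - tens_app m n A y k + tens_app m n B x k = 0"
      by (simp add: feasible_def)
    then show "al k * w k = al k * (tens_app m n A y k - tens_app m n B x k)" by simp
  qed simp
  finally show ?thesis by (simp add: right_diff_distrib sum_subtractf)
qed

lemma lam_derivative_identity:
  assumes "even m" "m \<ge> 2" "lam \<noteq> 0"
  shows "et = 2 * (\<Sum>k<n. (y k - lam_root * x k) * x k)"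
proof -
  \<comment> \<open>\<open>L\<close> depends on \<open>lam\<close> only through \<open>lam_root\<close>, a quadratic plus a linear term in it\<close>
  define c where "c = L x y w lam - (\<Sum>k<n. (y k - lam_root * x k)\<^sup>2) - et * lam_root"
  define \<Phi> where "\<Phi> u = c + (\<Sum>k<n. (y k - u * x k)\<^sup>2) + et * u" for u
  have "L x y w t = \<Phi> (root (m - 1) t)" for t
    by (simp add: \<Phi>_def c_def lagr_def obj_def Let_def algebra_simps)
  moreover have "DERIV \<Phi> lam_root :> (\<Sum>k<n. 2 * (y k - lam_root * x k) * - x k) + et"
    unfolding \<Phi>_def by (auto intro!: derivative_eq_intros sum.cong simp: algebra_simps)
  moreover have "DERIV (\<lambda>t. L x y w t) lam :> 0"
    using stationary by (simp add: stationary_with_def Let_def)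
  ultimately have "(\<Sum>k<n. 2 * (y k - lam_root * x k) * - x k) + et = 0"
    using assms by (intro DERIV_odd_root_comp_zero[of "m - 1" lam \<Phi>]) auto
  moreover have
    "(\<Sum>k<n. 2 * (y k - lam_root * x k) * - x k) = - 2 * (\<Sum>k<n. (y k - lam_root * x k) * x k)"
    by (simp add: sum_distrib_left algebra_simps flip: sum_negf)
  ultimately show ?thesis by simp
qed

lemma multiplier_formulas:
  assumes "even m" "m \<ge> 2" "lam \<noteq> 0"
  shows "et = 2 * (\<Sum>k<n. (y k - lam_root * x k) * x k)"
    and "de = 2 * real m * (\<Sum>k<n. x k * w k)\<^sup>2 + 2 * (\<Sum>k<n. (y k - lam_root * x k)\<^sup>2)
              - 2 * lam_root * (\<Sum>k<n. (y k - lam_root * x k) * x k)"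
proof -
  define \<rho> where "\<rho> = (\<Sum>k<n. (y k - lam_root * x k) * x k)"
  define U where "U = (\<Sum>k<n. (y k - lam_root * x k)\<^sup>2)"
  define P where "P = (\<Sum>k<n. x k * w k)\<^sup>2"
  define SA where "SA = (\<Sum>k<n. al k * tens_app m n A y k)"
  define SB where "SB = (\<Sum>k<n. al k * tens_app m n B x k)"
  define M where "M = real (m - 1)"
  show et: "et = 2 * \<rho>"
    unfolding \<rho>_def using lam_derivative_identity[OF assms] .
  have "(\<Sum>k<n. (y k - lam_root * x k) * y k) =
      (\<Sum>k<n. (y k - lam_root * x k)\<^sup>2 + lam_root * ((y k - lam_root * x k) * x k))"
    by (rule sum.cong) (simp_all add: power2_eq_square algebra_simps)
  also have "\<dots> = U + lam_root * \<rho>"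
    by (simp add: U_def \<rho>_def sum.distrib sum_distrib_left)
  finally have "lam_root * et = 2 * U + 2 * lam_root * \<rho> + M * SA"
    using euler_identity_y by (simp add: M_def SA_def mult.commute)
  with et have SA: "M * SA = - 2 * U"
    by simp
  have "2 * P = SA - SB"
    using euler_identity_w by (simp add: P_def SA_def SB_def)
  then have "M * (2 * P) = M * (SA - SB)"
    by simp
  then have "M * SB = M * SA - 2 * (M * P)"
    by (simp add: algebra_simps)
  moreover have "de = 2 * P - 2 * lam_root * \<rho> - M * SB"
    using euler_identity_x by (simp add: P_def SB_def M_def \<rho>_def)
  moreover have "real m * P = M * P + P"
    using assms(2) by (simp add: M_def algebra_simps)
  ultimately show "de = 2 * real m * P + 2 * U - 2 * lam_root * \<rho>"
    using SA by simp
qed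

end

theorem theorem5:
  fixes m r :: nat and ns :: "nat \<Rightarrow> nat"
    and A B :: "nat list \<Rightarrow> real"
    and x y w :: "nat \<Rightarrow> real" and lam :: real
    and al be ga mu th :: "nat \<Rightarrow> real" and de et :: real
  assumes "even m" and "m \<ge> 2"
    and "\<forall>i<r. ns i \<ge> 1"
    and "sub_symmetric m (tot_dim r ns) A"
    and "sub_symmetric m (tot_dim r ns) B"
    and "stationary_with m r ns A B al be ga mu th de et x y w lam"
    and "lam \<noteq> 0"
  shows "obj m (tot_dim r ns) x y w lam = 0 \<longleftrightarrow> de = 0 \<and> et = 0"
proof -
  interpret stationary_point m r ns A B x y w lam al be ga mu th de et
    using assms(3,6) by unfold_locales
  define U where "U = (\<Sum>k<n. (y k - lam_root * x k)\<^sup>2)"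
  define P where "P = (\<Sum>k<n. x k * w k)\<^sup>2"
  define \<rho> where "\<rho> = (\<Sum>k<n. (y k - lam_root * x k) * x k)"
  have et: "et = 2 * \<rho>" and de: "de = 2 * real m * P + 2 * U - 2 * lam_root * \<rho>"
    using multiplier_formulas[OF assms(1,2,7)] by (simp_all add: U_def P_def \<rho>_def)
  have obj: "obj m n x y w lam = U + P"
    by (simp add: obj_def U_def P_def)
  have "U \<ge> 0" "P \<ge> 0"
    by (simp_all add: U_def P_def sum_nonneg)
  have \<rho>: "\<rho> = 0" if "U = 0"
    using that sum_mult_eq_0_if_sum_squares_eq_0 by (simp add: U_def \<rho>_def)
  show ?thesis
  proof
    assume "obj m n x y w lam = 0"
    with obj \<open>U \<ge> 0\<close> \<open>P \<ge> 0\<close> have "U = 0" "P = 0" by linarith+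
    with \<rho> et de show "de = 0 \<and> et = 0" by simp
  next
    assume "de = 0 \<and> et = 0"
    with et de have "real m * P + U = 0" by simp
    moreover have "real m * P \<ge> 0" using \<open>P \<ge> 0\<close> by simp
    ultimately have "U = 0" "real m * P = 0" using \<open>U \<ge> 0\<close> by linarith+
    with assms(2) have "U = 0" "P = 0" by simp_all
    with obj show "obj m n x y w lam = 0" by simp
  qed
qed

end
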